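(* Let $U$ be an $\mathrm{OST}$-monoid, $V$ a supertropical monoid, and $\alpha:U\to V$ a surjective transmission such that for every $p\in V$ the fiber $\alpha^{-1}(p)$ is convex in $U$. Then $V$, equipped with the total ordering induced by $\alpha$, is an $\mathrm{OST}$-monoid.
   Context: A supertropical monoid is a commutative monoid $(U,\cdot)$ with absorbing element $0$ and distinguished idempotent $e$ with $ex=0\Rightarrow x=0$, together with a total ordering $\le_M$ on $M:=eU$, compatible with multiplication and with $0$ least, making $M$ a bipotent semiring. A transmission $\alpha:U\to V$ is a map with $\alpha(0)=0$, $\alpha(1)=1$, multiplicative, $\alpha(e_U)=e_V$, order-preserving on $eU$. An OST-monoid is a supertropical monoid $U$ with a total ordering $\le$ on $U$ such that: (OST1) $x\le y\Rightarrow xz\le yz$; (OST2) on $M$ the ordering $\le$ coincides with $\le_M$; (OST3) $0\le1\le e$. A subset $C$ of a totally ordered set $X$ is convex if $x,y\in C$, $z\in X$, $x\le z\le y$ imply $z\in C$. If $f:X\to Y$ is a surjection from a totally ordered set with convex fibers, the ordering induced by $f$ is the unique total ordering on $Y$ making $f$ order preserving. *)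

theory Defs
  imports Main
begin

text \<open>A commutative monoid with absorbing zero, a distinguished idempotent e,
  and an ordering leM intended to be a total order on the ghost ideal M = e U.\<close>
record 'a stm =
  carrier :: "'a set"
  mult    :: "'a \<Rightarrow> 'a \<Rightarrow> 'a"
  zero    :: 'a
  one     :: 'a
  ee      :: 'a
  leM     :: "'a \<Rightarrow> 'a \<Rightarrow> bool"

definition total_order_on :: "'a set \<Rightarrow> ('a \<Rightarrow> 'a \<Rightarrow> bool) \<Rightarrow> bool" where
  "total_order_on A le \<longleftrightarrow>
     (\<forall>x\<in>A. le x x) \<and>
     (\<forall>x\<in>A. \<forall>y\<in>A. le x y \<and> le y x \<longrightarrow> x = y) \<and>
     (\<forall>x\<in>A. \<forall>y\<in>A. \<forall>z\<in>A. le x y \<and> le y z \<longrightarrow> le x z) \<and>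
     (\<forall>x\<in>A. \<forall>y\<in>A. le x y \<or> le y x)"

definition ghost :: "('a, 'b) stm_scheme \<Rightarrow> 'a set" where
  "ghost U = (\<lambda>x. mult U (ee U) x) ` carrier U"

definition supertropical_monoid :: "('a, 'b) stm_scheme \<Rightarrow> bool" where
  "supertropical_monoid U \<longleftrightarrow>
     zero U \<in> carrier U \<and> one U \<in> carrier U \<and> ee U \<in> carrier U \<and>
     (\<forall>x\<in>carrier U. \<forall>y\<in>carrier U. mult U x y \<in> carrier U) \<and>
     (\<forall>x\<in>carrier U. \<forall>y\<in>carrier U. \<forall>z\<in>carrier U.
        mult U (mult U x y) z = mult U x (mult U y z)) \<and>
     (\<forall>x\<in>carrier U. \<forall>y\<in>carrier U. mult U x y = mult U y x) \<and>
     (\<forall>x\<in>carrier U. mult U (one U) x = x) \<and>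
     (\<forall>x\<in>carrier U. mult U (zero U) x = zero U) \<and>
     mult U (ee U) (ee U) = ee U \<and>
     (\<forall>x\<in>carrier U. mult U (ee U) x = zero U \<longrightarrow> x = zero U) \<and>
     total_order_on (ghost U) (leM U) \<and>
     (\<forall>x\<in>ghost U. \<forall>y\<in>ghost U. \<forall>z\<in>ghost U.
        leM U x y \<longrightarrow> leM U (mult U x z) (mult U y z)) \<and>
     (\<forall>x\<in>ghost U. leM U (zero U) x)"

definition transmission :: "('a, 'c) stm_scheme \<Rightarrow> ('b, 'd) stm_scheme \<Rightarrow> ('a \<Rightarrow> 'b) \<Rightarrow> bool" where
  "transmission U V \<alpha> \<longleftrightarrow>
     (\<forall>x\<in>carrier U. \<alpha> x \<in> carrier V) \<and>
     \<alpha> (zero U) = zero V \<and> \<alpha> (one U) = one V \<and>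
     (\<forall>x\<in>carrier U. \<forall>y\<in>carrier U. \<alpha> (mult U x y) = mult V (\<alpha> x) (\<alpha> y)) \<and>
     \<alpha> (ee U) = ee V \<and>
     (\<forall>x\<in>ghost U. \<forall>y\<in>ghost U. leM U x y \<longrightarrow> leM V (\<alpha> x) (\<alpha> y))"

definition OST_monoid :: "('a, 'b) stm_scheme \<Rightarrow> ('a \<Rightarrow> 'a \<Rightarrow> bool) \<Rightarrow> bool" where
  "OST_monoid U le \<longleftrightarrow>
     supertropical_monoid U \<and> total_order_on (carrier U) le \<and>
     (\<forall>x\<in>carrier U. \<forall>y\<in>carrier U. \<forall>z\<in>carrier U.
        le x y \<longrightarrow> le (mult U x z) (mult U y z)) \<and>
     (\<forall>x\<in>ghost U. \<forall>y\<in>ghost U. le x y \<longleftrightarrow> leM U x y) \<and>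
     le (zero U) (one U) \<and> le (one U) (ee U)"

definition convex_in :: "'a set \<Rightarrow> ('a \<Rightarrow> 'a \<Rightarrow> bool) \<Rightarrow> 'a set \<Rightarrow> bool" where
  "convex_in X le C \<longleftrightarrow>
     (\<forall>x\<in>C. \<forall>y\<in>C. \<forall>z\<in>X. le x z \<and> le z y \<longrightarrow> z \<in> C)"

definition order_preserving :: "'a set \<Rightarrow> ('a \<Rightarrow> 'a \<Rightarrow> bool) \<Rightarrow> ('b \<Rightarrow> 'b \<Rightarrow> bool) \<Rightarrow> ('a \<Rightarrow> 'b) \<Rightarrow> bool" where
  "order_preserving X le le' f \<longleftrightarrow> (\<forall>x\<in>X. \<forall>y\<in>X. le x y \<longrightarrow> le' (f x) (f y))"

end

theory Submission
  imports Defs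
begin

text \<open>Convexity of the fibres means that two distinct fibres never interleave: if some
  point of the fibre over p lies below some point of the fibre over q, then the whole fibre
  over p lies below the whole fibre over q. Hence comparing fibres is a total order on the
  image making the map monotone. Conversely, any total order on V making the transmission
  monotone reflects the order of U between distinct classes, so each OST axiom of U is
  pushed forward along the surjective, multiplicative transmission.\<close>

lemma total_order_on_refl: "total_order_on A le \<Longrightarrow> x \<in> A \<Longrightarrow> le x x"
  unfolding total_order_on_def by blast

lemma total_order_on_antisym:
  "total_order_on A le \<Longrightarrow> x \<in> A \<Longrightarrow> y \<in> A \<Longrightarrow> le x y \<Longrightarrow> le y x \<Longrightarrow> x = y"
  unfolding total_order_on_def by blast

lemma total_order_on_trans:
  "total_order_on A le \<Longrightarrow> x \<in> A \<Longrightarrow> y \<in> A \<Longrightarrow> z \<in> A \<Longrightarrow> le x y \<Longrightarrow> le y z \<Longrightarrow> le x z"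
  unfolding total_order_on_def by blast

lemma total_order_on_linear:
  "total_order_on A le \<Longrightarrow> x \<in> A \<Longrightarrow> y \<in> A \<Longrightarrow> \<not> le x y \<Longrightarrow> le y x"
  unfolding total_order_on_def by blast

lemma convex_inD:
  "convex_in X le C \<Longrightarrow> x \<in> C \<Longrightarrow> y \<in> C \<Longrightarrow> z \<in> X \<Longrightarrow> le x z \<Longrightarrow> le z y \<Longrightarrow> z \<in> C"
  unfolding convex_in_def by blast

lemma convex_fibres_no_crossing:
  assumes tot: "total_order_on X le"
    and conv: "\<forall>p\<in>f ` X. convex_in X le {x\<in>X. f x = p}"
    and X: "x0 \<in> X" "x1 \<in> X" "y0 \<in> X" "y1 \<in> X"
    and fibres: "f x0 = f x1" "f y0 = f y1"
    and crossing: "le y0 x0" "le x1 y1"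
  shows "f x0 = f y0"
proof (cases "le x0 y1")
  case True
  have "convex_in X le {x\<in>X. f x = f y0}" using conv X by blast
  from convex_inD[OF this _ _ _ crossing(1) True] X fibres show ?thesis by auto
next
  case False
  then have "le y1 x0" using total_order_on_linear[OF tot] X by blast
  have "convex_in X le {x\<in>X. f x = f x0}" using conv X by blast
  from convex_inD[OF this _ _ _ crossing(2) \<open>le y1 x0\<close>] X fibres show ?thesis by auto
qed

definition induced_order :: "'a set \<Rightarrow> ('a \<Rightarrow> 'a \<Rightarrow> bool) \<Rightarrow> ('a \<Rightarrow> 'b) \<Rightarrow> 'b \<Rightarrow> 'b \<Rightarrow> bool" where
  "induced_order X le f p q \<longleftrightarrow> p = q \<or> (\<forall>x\<in>X. \<forall>y\<in>X. f x = p \<longrightarrow> f y = q \<longrightarrow> le x y)"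

lemma total_order_on_induced_order:
  assumes tot: "total_order_on X le"
    and conv: "\<forall>p\<in>f ` X. convex_in X le {x\<in>X. f x = p}"
  shows "total_order_on (f ` X) (induced_order X le f)"
  unfolding total_order_on_def
proof (intro conjI ballI impI)
  fix p assume "p \<in> f ` X"
  show "induced_order X le f p p" by (simp add: induced_order_def)
next
  fix p q assume "p \<in> f ` X" "q \<in> f ` X"
    and pq: "induced_order X le f p q \<and> induced_order X le f q p"
  then obtain x y where xy: "x \<in> X" "y \<in> X" "f x = p" "f y = q" by blast
  show "p = q"
  proof (rule ccontr)
    assume "p \<noteq> q"
    with pq xy have "le x y" "le y x" unfolding induced_order_def by auto
    with \<open>p \<noteq> q\<close> xy show False using total_order_on_antisym[OF tot] by blast
  qed
next
  fix p q r assume "p \<in> f ` X" "q \<in> f ` X" "r \<in> f ` X"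
    and pqr: "induced_order X le f p q \<and> induced_order X le f q r"
  then obtain y where y: "y \<in> X" "f y = q" by blast
  show "induced_order X le f p r"
  proof (cases "p = q \<or> q = r")
    case True
    with pqr show ?thesis by auto
  next
    case False
    with pqr y have "le x y \<and> le y z" if "x \<in> X" "z \<in> X" "f x = p" "f z = r" for x z
      using that unfolding induced_order_def by auto
    with y show ?thesis
      unfolding induced_order_def using total_order_on_trans[OF tot] by blast
  qed
next
  fix p q assume "p \<in> f ` X" "q \<in> f ` X"
  show "induced_order X le f p q \<or> induced_order X le f q p"
  proof (rule ccontr)
    assume "\<not> ?thesis"
    then obtain x0 y0 x1 y1 where "x0 \<in> X" "y0 \<in> X" "x1 \<in> X" "y1 \<in> X"
      and "f x0 = p" "f y0 = q" "f x1 = p" "f y1 = q" "p \<noteq> q"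
      and "\<not> le x0 y0" "\<not> le y1 x1"
      unfolding induced_order_def by blast
    then show False
      using convex_fibres_no_crossing[OF tot conv, of x0 x1 y0 y1]
        total_order_on_linear[OF tot] by metis
  qed
qed

lemma order_preserving_induced_order:
  assumes tot: "total_order_on X le"
    and conv: "\<forall>p\<in>f ` X. convex_in X le {x\<in>X. f x = p}"
  shows "order_preserving X le (induced_order X le f) f"
  unfolding order_preserving_def
proof (intro ballI impI)
  fix x y assume xy: "x \<in> X" "y \<in> X" "le x y"
  have "le x' y'" if "x' \<in> X" "y' \<in> X" "f x' = f x" "f y' = f y" "f x \<noteq> f y" for x' y'
  proof (rule ccontr)
    assume "\<not> le x' y'"
    then have "le y' x'" using total_order_on_linear[OF tot] that by blast
    with that xy show False
      using convex_fibres_no_crossing[OF tot conv, of x' x y' y] by auto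
  qed
  then show "induced_order X le f (f x) (f y)" unfolding induced_order_def by blast
qed

lemma order_preserving_reflects_strict:
  assumes tot: "total_order_on X le" and tot': "total_order_on Y le'"
    and maps: "f ` X \<subseteq> Y" and mono: "order_preserving X le le' f"
    and x: "x \<in> X" and y: "y \<in> X"
    and le': "le' (f x) (f y)" and neq: "f x \<noteq> f y"
  shows "le x y"
proof (rule ccontr)
  assume "\<not> le x y"
  then have "le' (f y) (f x)"
    using total_order_on_linear[OF tot] x y mono unfolding order_preserving_def by blast
  with le' neq x y maps show False using total_order_on_antisym[OF tot'] by blast
qed

lemma ghost_subset_carrier: "supertropical_monoid U \<Longrightarrow> ghost U \<subseteq> carrier U"
  unfolding supertropical_monoid_def ghost_def by auto

lemma ghost_image_transmission:
  assumes SU: "supertropical_monoid U" and tr: "transmission U V \<alpha>"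
    and surj: "\<alpha> ` carrier U = carrier V"
  shows "ghost V = \<alpha> ` ghost U"
proof -
  have "ee U \<in> carrier U" using SU unfolding supertropical_monoid_def by blast
  moreover have "\<alpha> (ee U) = ee V"
    and "\<forall>x\<in>carrier U. \<forall>y\<in>carrier U. \<alpha> (mult U x y) = mult V (\<alpha> x) (\<alpha> y)"
    using tr unfolding transmission_def by blast+
  ultimately have "\<alpha> (mult U (ee U) x) = mult V (ee V) (\<alpha> x)" if "x \<in> carrier U" for x
    using that by metis
  then have "(\<lambda>x. mult V (ee V) x) ` \<alpha> ` carrier U = \<alpha> ` ghost U"
    unfolding ghost_def image_image by (auto intro: image_cong)
  then show ?thesis unfolding ghost_def surj .
qed

lemma transmission_image_mult_mono:
  assumes OST: "OST_monoid U le" and tr: "transmission U V \<alpha>"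
    and surj: "\<alpha> ` carrier U = carrier V"
    and totV: "total_order_on (carrier V) leV"
    and mono: "order_preserving (carrier U) le leV \<alpha>"
    and pqr: "p \<in> carrier V" "q \<in> carrier V" "r \<in> carrier V" and "leV p q"
  shows "leV (mult V p r) (mult V q r)"
proof -
  have tot: "total_order_on (carrier U) le"
    and mult_mono: "\<forall>x\<in>carrier U. \<forall>y\<in>carrier U. \<forall>z\<in>carrier U.
                      le x y \<longrightarrow> le (mult U x z) (mult U y z)"
    and closed: "\<forall>x\<in>carrier U. \<forall>y\<in>carrier U. mult U x y \<in> carrier U"
    using OST unfolding OST_monoid_def supertropical_monoid_def by blast+
  have hom: "\<forall>x\<in>carrier U. \<forall>y\<in>carrier U. \<alpha> (mult U x y) = mult V (\<alpha> x) (\<alpha> y)"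
    using tr unfolding transmission_def by blast
  obtain x y z where xyz: "x \<in> carrier U" "y \<in> carrier U" "z \<in> carrier U"
    "p = \<alpha> x" "q = \<alpha> y" "r = \<alpha> z"
    using surj pqr by blast
  show ?thesis
  proof (cases "p = q")
    case True
    have "mult V p r \<in> carrier V" using xyz hom closed surj by force
    with True show ?thesis using total_order_on_refl[OF totV] by blast
  next
    case False
    with xyz \<open>leV p q\<close> have "le x y"
      using order_preserving_reflects_strict[OF tot totV _ mono] surj by blast
    then have "le (mult U x z) (mult U y z)" using mult_mono xyz by blast
    then have "leV (\<alpha> (mult U x z)) (\<alpha> (mult U y z))"
      using mono closed xyz unfolding order_preserving_def by blast
    then show ?thesis using hom xyz by simp
  qed
qed

lemma transmission_image_le_ghost_iff:
  assumes OST: "OST_monoid U le" and SV: "supertropical_monoid V"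
    and tr: "transmission U V \<alpha>" and surj: "\<alpha> ` carrier U = carrier V"
    and totV: "total_order_on (carrier V) leV"
    and mono: "order_preserving (carrier U) le leV \<alpha>"
    and pq: "p \<in> ghost V" "q \<in> ghost V"
  shows "leV p q \<longleftrightarrow> leM V p q"
proof -
  have SU: "supertropical_monoid U" and tot: "total_order_on (carrier U) le"
    and le_ghost: "\<forall>x\<in>ghost U. \<forall>y\<in>ghost U. le x y \<longleftrightarrow> leM U x y"
    using OST unfolding OST_monoid_def by blast+
  have leM_mono: "\<forall>x\<in>ghost U. \<forall>y\<in>ghost U. leM U x y \<longrightarrow> leM V (\<alpha> x) (\<alpha> y)"
    using tr unfolding transmission_def by blast
  have totM: "total_order_on (ghost V) (leM V)"
    using SV unfolding supertropical_monoid_def by blast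
  obtain a b where ab: "a \<in> ghost U" "b \<in> ghost U" "p = \<alpha> a" "q = \<alpha> b"
    using ghost_image_transmission[OF SU tr surj] pq by blast
  have carr: "a \<in> carrier U" "b \<in> carrier U" "p \<in> carrier V" "q \<in> carrier V"
    using ab ghost_subset_carrier[OF SU] surj by auto
  show ?thesis
  proof
    assume "leV p q"
    then show "leM V p q"
      using order_preserving_reflects_strict[OF tot totV _ mono, of a b] surj
        le_ghost leM_mono ab carr total_order_on_refl[OF totM] pq
      by (cases "p = q") auto
  next
    assume "leM V p q"
    show "leV p q"
    proof (cases "le a b")
      case True
      then show ?thesis using mono ab carr unfolding order_preserving_def by blast
    next
      case False
      then have "leM V q p"
        using total_order_on_linear[OF tot] le_ghost leM_mono ab carr by blast
      with \<open>leM V p q\<close> have "p = q" using total_order_on_antisym[OF totM] pq by blast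
      then show ?thesis using total_order_on_refl[OF totV] carr by blast
    qed
  qed
qed

lemma OST_monoid_transmission_image:
  assumes OST: "OST_monoid U le" and SV: "supertropical_monoid V"
    and tr: "transmission U V \<alpha>" and surj: "\<alpha> ` carrier U = carrier V"
    and totV: "total_order_on (carrier V) leV"
    and mono: "order_preserving (carrier U) le leV \<alpha>"
  shows "OST_monoid V leV"
proof -
  have "zero U \<in> carrier U" "one U \<in> carrier U" "ee U \<in> carrier U"
    and "le (zero U) (one U)" "le (one U) (ee U)"
    using OST unfolding OST_monoid_def supertropical_monoid_def by blast+
  moreover have "\<alpha> (zero U) = zero V" "\<alpha> (one U) = one V" "\<alpha> (ee U) = ee V"
    using tr unfolding transmission_def by blast+
  ultimately have "leV (zero V) (one V)" "leV (one V) (ee V)"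
    using mono unfolding order_preserving_def by metis+
  then show ?thesis
    unfolding OST_monoid_def
    using SV totV transmission_image_mult_mono[OF OST tr surj totV mono]
      transmission_image_le_ghost_iff[OF OST SV tr surj totV mono] by blast
qed

theorem theorem61p10:
  fixes U :: "('a, 'c) stm_scheme" and V :: "('b, 'd) stm_scheme"
    and le :: "'a \<Rightarrow> 'a \<Rightarrow> bool" and \<alpha> :: "'a \<Rightarrow> 'b"
  assumes "OST_monoid U le"
    and "supertropical_monoid V"
    and "transmission U V \<alpha>"
    and "\<alpha> ` carrier U = carrier V"
    and "\<forall>p\<in>carrier V. convex_in (carrier U) le {x\<in>carrier U. \<alpha> x = p}"
  shows "(\<exists>leV. total_order_on (carrier V) leV \<and> order_preserving (carrier U) le leV \<alpha>)
    \<and> (\<forall>leV. total_order_on (carrier V) leV \<and> order_preserving (carrier U) le leV \<alpha>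
             \<longrightarrow> OST_monoid V leV)"
proof
  have tot: "total_order_on (carrier U) le" using assms(1) unfolding OST_monoid_def by blast
  have conv: "\<forall>p\<in>\<alpha> ` carrier U. convex_in (carrier U) le {x\<in>carrier U. \<alpha> x = p}"
    using assms(4,5) by simp
  show "\<exists>leV. total_order_on (carrier V) leV \<and> order_preserving (carrier U) le leV \<alpha>"
    using total_order_on_induced_order[OF tot conv] order_preserving_induced_order[OF tot conv]
      assms(4) by auto
  show "\<forall>leV. total_order_on (carrier V) leV \<and> order_preserving (carrier U) le leV \<alpha>
             \<longrightarrow> OST_monoid V leV"
    using OST_monoid_transmission_image[OF assms(1-4)] by blast
qed

end
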